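(* Let $\varphi=\frac{1+\sqrt5}{2}$. Let $z\in\{0,1\}^*$, $n=[z]_F$ and $n'=[z0]_F$, and suppose $n\geq 1$ and ${\bf f}[n]=a$. Then $\lceil n/\varphi^2\rceil=\lceil n'/\varphi^3\rceil$.
   Context: Fibonacci numbers: $F_0=0$, $F_1=1$, $F_{m+2}=F_{m+1}+F_m$. For a binary word $k_m\cdots k_0$, $[k_m\cdots k_0]_F=\sum_{i=0}^m k_iF_{i+2}$. Standard Fibonacci words: $f_{-1}=b$, $f_0=a$, $f_{m+1}=f_mf_{m-1}$; the Fibonacci word ${\bf f}=\lim f_m=abaababaab\cdots$ is indexed from ${\bf f}[1]=a$. *)

theory Defs
  imports Complex_Main "HOL-Number_Theory.Fib"
begin

fun fibval :: "nat list \<Rightarrow> nat" where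
  "fibval [] = 0"
| "fibval (k # ks) = k * fib (length ks + 2) + fibval ks"

datatype letter = a | b

text \<open>Standard Fibonacci words, shifted by one: fword m = f_(m-1),
  so fword 0 = f_(-1) = b, fword 1 = f_0 = a, f_(m+1) = f_m f_(m-1).\<close>
fun fword :: "nat \<Rightarrow> letter list" where
  "fword 0 = [b]"
| "fword (Suc 0) = [a]"
| "fword (Suc (Suc m)) = fword (Suc m) @ fword m"

text \<open>The infinite Fibonacci word, 1-indexed: f[n] for n >= 1. Since each f_m is a prefix of
  f_(m+1) and |f_(n+1)| = F_(n+3) >= n, the n-th letter of the limit is read off f_(n+1).\<close>
definition fibword :: "nat \<Rightarrow> letter" where
  "fibword n = fword (n + 2) ! (n - 1)"

definition phi :: real where
  "phi = (1 + sqrt 5) / 2"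

end

theory Submission
  imports Defs
begin

text \<open>
  Write \<rho> = \<phi> - 1 = 1/\<phi>. First, the Fibonacci word is the lower mechanical word of slope \<rho>:
  f[n] = a iff floor((n+1)\<rho>) = floor(n\<rho>) + 1. This follows from f_(m+1) = f_m f_(m-1) by
  induction, because floor((F_(j+2) + q)\<rho>) = F_(j+1) + floor(q\<rho>) for 1 \<le> q \<le> F_(j+1) + 1: the
  error F_(j+2) \<rho> - F_(j+1) = \<plusminus>\<rho>^(j+2) is smaller than the distance from q\<rho> to any integer t,
  since |q\<rho> - t| (q\<phi> + t) = |q^2 - qt - t^2| \<ge> 1 by the irrationality of \<surd>5.
  Second, appending a 0 to a 0-1 word multiplies its value by \<phi> up to an error in (-\<rho>^2, \<rho>),
  as appending a digit d turns the error E into d\<rho>^2 - \<rho>E. So f[n] = a forces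
  n' = n + floor(n\<rho>) + 1, and then n/\<phi>^2 = n - n\<rho> and n'/\<phi>^3 = n'(2\<rho> - 1) both have ceiling
  n - floor(n\<rho>).
\<close>

definition \<rho> :: real where
  "\<rho> = phi - 1"

lemma phi_squared: "phi\<^sup>2 = phi + 1"
  unfolding phi_def by (simp add: power2_eq_square field_simps)

lemma phi_times_rho: "phi * \<rho> = 1"
  using phi_squared unfolding \<rho>_def by (simp add: power2_eq_square algebra_simps)

lemma rho_squared: "\<rho>\<^sup>2 = 1 - \<rho>"
  using phi_times_rho unfolding \<rho>_def by (simp add: power2_eq_square algebra_simps)

lemma rho_cubed: "\<rho> ^ 3 = 2 * \<rho> - 1"
proof -
  have "\<rho> ^ 3 = \<rho> * \<rho>\<^sup>2" by (simp add: power2_eq_square power3_eq_cube)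
  also have "\<dots> = \<rho> * (1 - \<rho>)" by (simp only: rho_squared)
  also have "\<dots> = \<rho> - \<rho>\<^sup>2" by (simp add: power2_eq_square algebra_simps)
  finally show ?thesis by (simp add: rho_squared)
qed

lemma phi_plus_rho: "phi + \<rho> = sqrt 5"
  unfolding \<rho>_def phi_def by (simp add: field_simps)

lemma one_minus_phi: "1 - phi = - \<rho>"
  unfolding \<rho>_def by simp

lemma sqrt5_bounds: "11/5 < sqrt (5::real)" "sqrt (5::real) < 56/25"
proof -
  show "11/5 < sqrt (5::real)" by (rule real_less_rsqrt) (simp add: power2_eq_square)
  show "sqrt (5::real) < 56/25" by (rule real_less_lsqrt) (simp_all add: power2_eq_square)
qed

lemma rho_bounds: "3/5 < \<rho>" "\<rho> < 31/50"
  using sqrt5_bounds unfolding \<rho>_def phi_def by simp_all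

lemma phi_gt_one: "1 < phi"
  using rho_bounds unfolding \<rho>_def by simp

lemma fib_Suc_minus_phi_times_fib: "real (fib (Suc j)) - phi * fib j = (- \<rho>) ^ j"
proof (induction j)
  case (Suc j)
  have "real (fib (Suc (Suc j))) - phi * fib (Suc j) = (1 - phi) * fib (Suc j) + phi * \<rho> * fib j"
    using phi_times_rho by (simp add: algebra_simps)
  also have "\<dots> = - \<rho> * (real (fib (Suc j)) - phi * fib j)"
    unfolding one_minus_phi by (simp add: algebra_simps)
  finally show ?case using Suc.IH by simp
qed simp

lemma five_dvd_square_imp_dvd:
  fixes x :: int
  assumes "5 dvd x\<^sup>2"
  shows "5 dvd x"
proof -
  have "x\<^sup>2 mod 5 = (x mod 5)\<^sup>2 mod 5" by (simp add: power_mod)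
  moreover have "x mod 5 \<in> {0, 1, 2, 3, 4}" by auto
  ultimately show ?thesis using assms by auto
qed

lemma square_ne_five_times_square:
  fixes s q :: int
  assumes "q \<noteq> 0"
  shows "s\<^sup>2 \<noteq> 5 * q\<^sup>2"
  using assms
proof (induction "nat \<bar>q\<bar>" arbitrary: s q rule: less_induct)
  case less
  show ?case
  proof
    assume eq: "s\<^sup>2 = 5 * q\<^sup>2"
    then obtain s' where s': "s = 5 * s'" using five_dvd_square_imp_dvd by (metis dvd_triv_left dvdE)
    with eq have eq': "q\<^sup>2 = 5 * s'\<^sup>2" by (simp add: power2_eq_square)
    then obtain q' where q': "q = 5 * q'" using five_dvd_square_imp_dvd by (metis dvd_triv_left dvdE)
    with eq' have "s'\<^sup>2 = 5 * q'\<^sup>2" by (simp add: power2_eq_square)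
    moreover have "nat \<bar>q'\<bar> < nat \<bar>q\<bar>" "q' \<noteq> 0" using q' less.prems by auto
    ultimately show False using less.hyps by blast
  qed
qed

lemma golden_norm_nonzero:
  fixes q t :: int
  assumes "q \<noteq> 0"
  shows "t\<^sup>2 + q * t - q\<^sup>2 \<noteq> 0"
proof
  assume "t\<^sup>2 + q * t - q\<^sup>2 = 0"
  then have "(2 * t + q)\<^sup>2 = 5 * q\<^sup>2" by (simp add: power2_eq_square algebra_simps)
  with assms show False using square_ne_five_times_square by blast
qed

lemma fibval_change_digit: "fibval (u @ d # v) = fibval (u @ 0 # v) + d * fib (length v + 2)"
  by (induction u) simp_all

lemma fibval_append_zeros: "fibval (u @ [0, 0]) = fibval (u @ [0]) + fibval u"
  by (induction u) (simp_all add: fib_plus_2[of "length _ + 2"] algebra_simps)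

definition shift_error :: "nat list \<Rightarrow> real" where
  "shift_error z = real (fibval (z @ [0])) - phi * fibval z"

lemma shift_error_snoc: "shift_error (u @ [d]) = \<rho>\<^sup>2 * d - \<rho> * shift_error u"
proof -
  have "fibval (u @ [d, 0]) = fibval (u @ [0]) + fibval u + 2 * d"
    using fibval_change_digit[of u d "[0]"] fibval_append_zeros[of u] by (simp add: numeral_eq_Suc)
  moreover have "fibval (u @ [d]) = fibval (u @ [0]) + d"
    using fibval_change_digit[of u d "[]"] by simp
  ultimately have "shift_error (u @ [d]) = (1 - phi) * fibval (u @ [0]) + fibval u + (2 - phi) * d"
    unfolding shift_error_def by (simp add: algebra_simps)
  also have "\<dots> = \<rho>\<^sup>2 * d - \<rho> * (fibval (u @ [0]) - phi * fibval u)"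
  proof -
    have "2 - phi = \<rho>\<^sup>2" using rho_squared one_minus_phi by simp
    moreover have "\<rho> * (phi * fibval u) = fibval u"
      using phi_times_rho by (metis mult.assoc mult.commute mult_1)
    ultimately show ?thesis unfolding one_minus_phi by (simp add: right_diff_distrib)
  qed
  finally show ?thesis unfolding shift_error_def .
qed

lemma shift_error_bounds:
  assumes "set z \<subseteq> {0, 1}"
  shows "- \<rho>\<^sup>2 < shift_error z \<and> shift_error z < \<rho>"
  using assms
proof (induction z rule: rev_induct)
  case Nil
  show ?case using rho_bounds by (simp add: shift_error_def)
next
  case (snoc d u)
  then have IH: "- \<rho>\<^sup>2 < shift_error u" "shift_error u < \<rho>" and d: "real d = 0 \<or> real d = 1"
    by auto
  have "\<rho> > 0" "\<rho>\<^sup>2 > 0" using rho_bounds by simp_all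
  then have lower: "- (\<rho> ^ 3) < \<rho> * shift_error u" and upper: "\<rho> * shift_error u < \<rho>\<^sup>2"
    using mult_strict_left_mono[OF IH(1) \<open>\<rho> > 0\<close>] mult_strict_left_mono[OF IH(2) \<open>\<rho> > 0\<close>]
    by (simp_all add: power2_eq_square power3_eq_cube)
  with d rho_squared rho_cubed rho_bounds \<open>\<rho>\<^sup>2 > 0\<close> show ?case
    unfolding shift_error_snoc by (elim disjE; intro conjI; simp; linarith)
qed

lemma fib_times_sqrt5: "real (fib n) * sqrt 5 = phi ^ n - (- \<rho>) ^ n"
proof -
  have "(1 - sqrt 5) / 2 = - \<rho>" unfolding \<rho>_def phi_def by (simp add: field_simps)
  then show ?thesis using fib_closed_form[of n] unfolding phi_def by simp
qed

lemma rho_approx_times_conjugate: "(x * \<rho> - y) * (x * phi + y) = x\<^sup>2 - x * y - y\<^sup>2"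
proof -
  have "(x * \<rho> - y) * (x * phi + y) = x\<^sup>2 * (phi * \<rho>) - x * y * (phi - \<rho>) - y\<^sup>2"
    by (simp add: power2_eq_square algebra_simps)
  then show ?thesis using phi_times_rho by (simp add: \<rho>_def)
qed

lemma one_le_rho_approx_times_conjugate:
  fixes q :: nat and t :: int
  assumes "1 \<le> q" "0 \<le> t"
  shows "1 \<le> \<bar>q * \<rho> - t\<bar> * (q * phi + t)"
proof -
  have "(int q)\<^sup>2 - int q * t - t\<^sup>2 \<noteq> 0"
    using golden_norm_nonzero[of "int q" t] assms by (simp add: power2_eq_square algebra_simps)
  then have "1 \<le> \<bar>(int q)\<^sup>2 - int q * t - t\<^sup>2\<bar>" by linarith
  then have "1 \<le> \<bar>real_of_int ((int q)\<^sup>2 - int q * t - t\<^sup>2)\<bar>"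
    by (metis of_int_1_le_iff of_int_abs)
  also have "\<dots> = \<bar>(q * \<rho> - t) * (q * phi + t)\<bar>"
    by (simp add: rho_approx_times_conjugate)
  also have "\<dots> = \<bar>q * \<rho> - t\<bar> * (q * phi + t)"
    using assms rho_bounds by (simp add: abs_mult \<rho>_def)
  finally show ?thesis .
qed

lemma rho_power_less_tenth:
  assumes "3 \<le> j"
  shows "\<rho> ^ (j + 2) < 1/10"
proof -
  have "\<rho> ^ (j + 2) \<le> \<rho> ^ 5" using assms rho_bounds by (intro power_decreasing) auto
  also have "\<dots> < (31/50) ^ 5" using rho_bounds by (intro power_strict_mono) auto
  finally show ?thesis by (simp add: power_divide)
qed

lemma rho_power_times_multiple_less_one:
  assumes j: "3 \<le> j" and q: "q \<le> fib (j + 1) + 1"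
  shows "\<rho> ^ (j + 2) * (q * sqrt 5 + \<rho> ^ (j + 2)) < 1"
proof -
  define \<epsilon> where "\<epsilon> = \<rho> ^ (j + 2)"
  have "\<epsilon> > 0" unfolding \<epsilon>_def using rho_bounds by simp
  have "\<bar>(- \<rho>) ^ (j + 1)\<bar> \<le> 1"
    unfolding power_abs using rho_bounds by (intro power_le_one) auto
  then have "real q * sqrt 5 \<le> phi ^ (j + 1) + 1 + sqrt 5"
    using fib_times_sqrt5[of "j + 1"] mult_right_mono[of q "fib (j + 1) + 1" "sqrt 5"] q
    by (simp add: algebra_simps abs_le_iff)
  then have "\<epsilon> * (q * sqrt 5 + \<epsilon>) \<le> \<epsilon> * (phi ^ (j + 1) + (1 + sqrt 5 + \<epsilon>))"
    using \<open>\<epsilon> > 0\<close> by (intro mult_left_mono) auto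
  also have "\<dots> = \<rho> + \<epsilon> * (1 + sqrt 5 + \<epsilon>)"
  proof -
    have "\<epsilon> * phi ^ (j + 1) = \<rho> * (\<rho> * phi) ^ (j + 1)"
      unfolding \<epsilon>_def by (simp add: power_mult_distrib)
    then show ?thesis using phi_times_rho by (simp add: distrib_left mult.commute)
  qed
  also have "\<dots> < \<rho> + 1/10 * (1 + 56/25 + 1/10)"
    using rho_power_less_tenth[OF j] \<open>\<epsilon> > 0\<close> sqrt5_bounds unfolding \<epsilon>_def[symmetric]
    by (intro add_strict_left_mono mult_strict_mono) auto
  also have "\<dots> < 1" using rho_bounds by simp
  finally show ?thesis unfolding \<epsilon>_def .
qed

lemma rho_multiple_far_from_int:
  fixes q :: nat and t :: int
  assumes j: "3 \<le> j" and q: "1 \<le> q" "q \<le> fib (j + 1) + 1"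
  shows "\<rho> ^ (j + 2) < \<bar>q * \<rho> - t\<bar>"
proof (rule ccontr)
  define \<epsilon> where "\<epsilon> = \<rho> ^ (j + 2)"
  assume "\<not> \<rho> ^ (j + 2) < \<bar>q * \<rho> - t\<bar>"
  then have close: "\<bar>q * \<rho> - t\<bar> \<le> \<epsilon>" unfolding \<epsilon>_def by simp
  have "0 \<le> q * \<rho>" using rho_bounds by simp
  then have "-1 < real_of_int t" "t \<le> q * \<rho> + \<epsilon>"
    using close rho_power_less_tenth[OF j] unfolding \<epsilon>_def by (auto simp: abs_le_iff)
  then have t: "0 \<le> t" "t \<le> q * \<rho> + \<epsilon>" by simp_all
  have "1 \<le> \<bar>q * \<rho> - t\<bar> * (q * phi + t)"
    using one_le_rho_approx_times_conjugate q t by simp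
  also have "\<dots> \<le> \<epsilon> * (q * (phi + \<rho>) + \<epsilon>)"
    using close t phi_gt_one by (intro mult_mono) (auto simp: algebra_simps)
  also have "\<dots> < 1"
    unfolding phi_plus_rho \<epsilon>_def using rho_power_times_multiple_less_one j q by simp
  finally show False by simp
qed

lemma floor_fib_plus_times_rho:
  fixes q :: nat
  assumes "3 \<le> j" "1 \<le> q" "q \<le> fib (j + 1) + 1"
  shows "\<lfloor>(fib (j + 2) + q) * \<rho>\<rfloor> = fib (j + 1) + \<lfloor>q * \<rho>\<rfloor>"
proof -
  define s where "s = \<lfloor>q * \<rho>\<rfloor>"
  define \<delta> where "\<delta> = fib (j + 2) * \<rho> - fib (j + 1)"
  have "\<delta> = \<rho> * (real (fib (Suc (j + 1))) - phi * fib (j + 1))"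
    unfolding \<delta>_def using phi_times_rho by (simp add: algebra_simps)
  then have "\<bar>\<delta>\<bar> = \<rho> ^ (j + 2)"
    unfolding fib_Suc_minus_phi_times_fib using rho_bounds by (simp add: abs_mult power_abs)
  moreover have "\<rho> ^ (j + 2) < \<bar>q * \<rho> - s\<bar>"
    by (rule rho_multiple_far_from_int[OF assms])
  moreover have "\<rho> ^ (j + 2) < \<bar>q * \<rho> - (s + 1)\<bar>"
    using rho_multiple_far_from_int[OF assms, of "s + 1"] by simp
  moreover have "s \<le> q * \<rho>" "q * \<rho> < s + 1"
    unfolding s_def by linarith+
  ultimately have "\<lfloor>q * \<rho> + \<delta>\<rfloor> = s"
    unfolding floor_eq_iff by (simp add: abs_if split: if_splits)
  moreover have "(fib (j + 2) + q) * \<rho> = q * \<rho> + \<delta> + fib (j + 1)"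
    unfolding \<delta>_def by (simp add: algebra_simps)
  ultimately show ?thesis unfolding s_def by simp
qed

definition mechanical_letter :: "nat \<Rightarrow> letter" where
  "mechanical_letter n = (if \<lfloor>real (n + 1) * \<rho>\<rfloor> = \<lfloor>n * \<rho>\<rfloor> + 1 then a else b)"

lemma mechanical_letter_fib_plus:
  assumes "3 \<le> j" "1 \<le> p" "p \<le> fib (j + 1)"
  shows "mechanical_letter (fib (j + 2) + p) = mechanical_letter p"
proof -
  have "\<lfloor>(fib (j + 2) + p) * \<rho>\<rfloor> = fib (j + 1) + \<lfloor>p * \<rho>\<rfloor>"
    "\<lfloor>(fib (j + 2) + (p + 1)) * \<rho>\<rfloor> = fib (j + 1) + \<lfloor>(p + 1) * \<rho>\<rfloor>"
    using floor_fib_plus_times_rho[of j p] floor_fib_plus_times_rho[of j "p + 1"] assms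
    by (simp_all del: fib.simps)
  then show ?thesis unfolding mechanical_letter_def by (simp del: fib.simps add: ac_simps)
qed

lemma mechanical_letter_initial:
  "mechanical_letter 1 = a" "mechanical_letter 2 = b" "mechanical_letter 3 = a"
  "mechanical_letter 4 = a" "mechanical_letter 5 = b"
proof -
  have "\<lfloor>\<rho>\<rfloor> = 0" "\<lfloor>2 * \<rho>\<rfloor> = 1" "\<lfloor>3 * \<rho>\<rfloor> = 1"
    "\<lfloor>4 * \<rho>\<rfloor> = 2" "\<lfloor>5 * \<rho>\<rfloor> = 3" "\<lfloor>6 * \<rho>\<rfloor> = 3"
    using rho_bounds by (simp_all add: floor_eq_iff)
  then show "mechanical_letter 1 = a" "mechanical_letter 2 = b" "mechanical_letter 3 = a"
    "mechanical_letter 4 = a" "mechanical_letter 5 = b"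
    by (simp_all add: mechanical_letter_def)
qed

lemma fword_eq_mechanical_letter:
  "1 \<le> j \<Longrightarrow> fword j = map (\<lambda>i. mechanical_letter (Suc i)) [0..<fib (j + 1)]"
proof (induction j rule: less_induct)
  case (less j)
  show ?case
  proof (cases "j \<le> 4")
    case True
    with less.prems consider "j = 1" | "j = 2" | "j = 3" | "j = 4" by linarith
    then show ?thesis
      using mechanical_letter_initial by cases (simp_all add: numeral_eq_Suc upt_rec)
  next
    case False
    define i where "i = j - 2"
    have j: "j = i + 2" "3 \<le> i" using False unfolding i_def by simp_all
    let ?w = "\<lambda>m n. map (\<lambda>k. mechanical_letter (Suc k)) [m..<n]"
    have shift: "?w 0 (fib (i + 1)) = ?w (fib (i + 2)) (fib (i + 2) + fib (i + 1))"
    proof -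
      have "mechanical_letter (Suc k) = mechanical_letter (Suc (k + fib (i + 2)))"
        if "k < fib (i + 1)" for k
        using mechanical_letter_fib_plus[OF \<open>3 \<le> i\<close>, of "Suc k"] that
        by (simp del: fib.simps add: ac_simps)
      then have "?w 0 (fib (i + 1))
          = map (\<lambda>k. mechanical_letter (Suc k)) (map (\<lambda>k. k + fib (i + 2)) [0..<fib (i + 1)])"
        by (simp del: fib.simps)
      then show ?thesis by (simp only: map_add_upt add.commute)
    qed
    have "fword j = fword (i + 1) @ fword i" unfolding j by (simp add: numeral_eq_Suc)
    also have "\<dots> = ?w 0 (fib (i + 2)) @ ?w 0 (fib (i + 1))"
      using less.IH j by simp
    also have "\<dots> = ?w 0 (fib (i + 2) + fib (i + 1))"
      unfolding shift map_append[symmetric] by (simp only: upt_add_eq_append[OF le0])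
    also have "fib (i + 2) + fib (i + 1) = fib (j + 1)"
      unfolding j using fib_plus_2[of "i + 1"] by (simp del: fib.simps)
    finally show ?thesis .
  qed
qed

lemma less_fib_plus_3: "n < fib (n + 3)"
proof (induction n)
  case (Suc n)
  have "fib (Suc n + 3) = fib (n + 3) + fib (n + 2)"
    using fib_plus_2[of "n + 2"] by (simp add: numeral_eq_Suc)
  moreover have "0 < fib (n + 2)" by (rule fib_neq_0_nat) simp
  ultimately show ?case using Suc.IH by linarith
qed (simp add: numeral_eq_Suc)

lemma fibword_eq_mechanical_letter:
  assumes "1 \<le> n"
  shows "fibword n = mechanical_letter n"
proof -
  have "n - 1 < fib (n + 2 + 1)" using less_fib_plus_3[of n] by (simp del: fib.simps add: numeral_eq_Suc)
  with assms show ?thesis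
    using fword_eq_mechanical_letter[of "n + 2"] unfolding fibword_def by (simp del: fib.simps)
qed

lemma fibval_append_zero_eq:
  assumes z: "set z \<subseteq> {0, 1}" and n: "n = fibval z"
    and step: "\<lfloor>real (n + 1) * \<rho>\<rfloor> = \<lfloor>n * \<rho>\<rfloor> + 1"
  shows "int (fibval (z @ [0])) = n + \<lfloor>n * \<rho>\<rfloor> + 1"
proof -
  define K where "K = \<lfloor>n * \<rho>\<rfloor>"
  have "real_of_int (K + 1) \<le> real (n + 1) * \<rho>" unfolding K_def step[symmetric] by (rule of_int_floor_le)
  then have K: "K \<le> n * \<rho>" "n * \<rho> < K + 1" "K + 1 \<le> n * \<rho> + \<rho>"
    unfolding K_def by (linarith, linarith, simp add: algebra_simps)
  have "phi * n = n + n * \<rho>" unfolding \<rho>_def by (simp add: algebra_simps)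
  with shift_error_bounds[OF z]
  have "- \<rho>\<^sup>2 < fibval (z @ [0]) - (n + n * \<rho>)" "fibval (z @ [0]) - (n + n * \<rho>) < \<rho>"
    unfolding shift_error_def n by simp_all
  with K rho_squared rho_bounds
  have "n + K < real (fibval (z @ [0]))" "real (fibval (z @ [0])) < n + K + 2"
    by linarith+
  then show ?thesis unfolding K_def by linarith
qed

lemma divide_phi_power: "x / phi ^ k = x * \<rho> ^ k"
proof -
  have "\<rho> = 1 / phi" using phi_times_rho phi_gt_one by (simp add: field_simps)
  show ?thesis unfolding \<open>\<rho> = 1 / phi\<close> by (simp add: power_one_over)
qed

lemma ceiling_divide_phi_squared: "\<lceil>real n / phi\<^sup>2\<rceil> = n - \<lfloor>n * \<rho>\<rfloor>"
proof -
  have "real n / phi\<^sup>2 = - (n * \<rho>) + of_int (int n)"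
    unfolding divide_phi_power rho_squared by (simp add: algebra_simps)
  then show ?thesis by (simp only: ceiling_add_of_int ceiling_minus)
qed

lemma ceiling_divide_phi_cubed:
  fixes n :: nat
  assumes step: "\<lfloor>real (n + 1) * \<rho>\<rfloor> = \<lfloor>n * \<rho>\<rfloor> + 1"
  shows "\<lceil>real_of_int (n + \<lfloor>n * \<rho>\<rfloor> + 1) / phi ^ 3\<rceil> = n - \<lfloor>n * \<rho>\<rfloor>"
proof -
  define K where "K = \<lfloor>n * \<rho>\<rfloor>"
  define x where "x = n * \<rho>"
  have "real_of_int (K + 1) \<le> real (n + 1) * \<rho>" unfolding K_def step[symmetric] by (rule of_int_floor_le)
  then have gap: "0 < K + 1 - x" "K + 1 - x \<le> \<rho>"
    unfolding K_def x_def by (linarith, simp add: algebra_simps)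
  have "(n - K) - real_of_int (n + K + 1) / phi ^ 3 = 1 - 2 * \<rho> * (K + 1 - x)"
    unfolding divide_phi_power rho_cubed x_def using rho_squared by simp algebra
  moreover have "0 < \<rho> * (K + 1 - x)" "\<rho> * (K + 1 - x) \<le> \<rho>\<^sup>2"
    using gap rho_bounds by (simp_all add: power2_eq_square mult_left_mono)
  ultimately show ?thesis
    unfolding K_def[symmetric] ceiling_eq_iff using rho_squared rho_bounds by simp
qed

theorem proposition5:
  fixes z :: "nat list" and n n' :: nat
  assumes "set z \<subseteq> {0, 1}"
    and "n = fibval z"
    and "n' = fibval (z @ [0])"
    and "n \<ge> 1"
    and "fibword n = a"
  shows "\<lceil>real n / phi ^ 2\<rceil> = \<lceil>real n' / phi ^ 3\<rceil>"
proof -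
  have step: "\<lfloor>real (n + 1) * \<rho>\<rfloor> = \<lfloor>n * \<rho>\<rfloor> + 1"
    using assms(4,5) fibword_eq_mechanical_letter unfolding mechanical_letter_def by (simp split: if_splits)
  then have "real n' = real_of_int (n + \<lfloor>n * \<rho>\<rfloor> + 1)"
    using fibval_append_zero_eq[OF assms(1,2)] assms(3) by (metis of_int_of_nat_eq)
  then show ?thesis
    using ceiling_divide_phi_squared ceiling_divide_phi_cubed[OF step] by simp
qed

end
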